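(* Let $\Delta\in(0,1)$. (i) If $N\ge 8\gamma_{4k}^{-1}\ln(2/\Delta)+12k\ln(2R/\Delta)$ (with $\gamma_{4k}>0$), then with probability at least $1-\Delta$, $$1-\widehat\tau\ge\frac{C}{2}\left[1+\frac{1-\gamma_{4k}}{\gamma_{4k}}\bar C\right]^{-1}(1-\tau).$$ (ii) If $N\ge 3\gamma_{2k}^{-1}\ln(2/\Delta)+16k\ln(2R/\Delta)$ (with $\gamma_{2k}>0$), then with probability at least $1-\Delta$, $$1-\tau\ge\frac{C}{2}\left[1+\frac{1-\widehat\gamma_{4k}}{\widehat\gamma_{4k}}\bar C\right]^{-1}(1-\widehat\tau)$$ (where the right-hand side is read as $0$ if $\widehat\gamma_{4k}=0$).
   Context: Let $R\ge 2$ be an integer and $\rho=(\rho_1,\dots,\rho_R)$ a probability vector with $\rho_r>0$ for all $r$. Let $Y_1,\dots,Y_N$ be i.i.d. labels with $\mathbb P(Y_j=r)=\rho_r$, $N_r=|\{j:Y_j=r\}|$, $\widehat\rho_r=N_r/N$. Fix an integer $k\ge1$. Set $\tau:=1-\sum_{r}\rho_r(1-\rho_r)^k$ and $\widehat\tau:=1-\sum_r\widehat\rho_r(1-\widehat\rho_r)^k$. For $\alpha\ge1$ define $\gamma_\alpha:=\sum_{r:\rho_r\le 1/\alpha}\rho_r$ and $\widehat\gamma_\alpha:=\sum_{r:\widehat\rho_r\le1/\alpha}\widehat\rho_r$. Let $C:=\inf_{k'\ge1}\left(1-\frac{1}{2k'}\right)^{k'}$ and $\bar C:=\sup_{k'\ge1}\left(1-\frac{1}{4k'}\right)^{k'}$,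 the infimum/supremum over positive integers $k'$. *)

theory Defs
  imports "HOL-Analysis.Analysis"
begin

text \<open>Labels are 0..R-1 (instead of 1..R); a label sample is a function
  Y on {..<N} with values in {..<R}.\<close>

text \<open>Probability of an event E under N i.i.d. labels with law rho:
  the product distribution, written as an explicit finite sum.\<close>
definition sample_prob :: "nat \<Rightarrow> nat \<Rightarrow> (nat \<Rightarrow> real) \<Rightarrow> ((nat \<Rightarrow> nat) \<Rightarrow> bool) \<Rightarrow> real" where
  "sample_prob R N rho E =
     (\<Sum>Y\<in>{Y \<in> {..<N} \<rightarrow>\<^sub>E {..<R}. E Y}. \<Prod>j<N. rho (Y j))"

definition emp_freq :: "nat \<Rightarrow> (nat \<Rightarrow> nat) \<Rightarrow> nat \<Rightarrow> real" where
  "emp_freq N Y r = real (card {j. j < N \<and> Y j = r}) / real N"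

definition tau_of :: "nat \<Rightarrow> nat \<Rightarrow> (nat \<Rightarrow> real) \<Rightarrow> real" where
  "tau_of R k p = 1 - (\<Sum>r<R. p r * (1 - p r) ^ k)"

definition gamma_of :: "nat \<Rightarrow> real \<Rightarrow> (nat \<Rightarrow> real) \<Rightarrow> real" where
  "gamma_of R \<alpha> p = (\<Sum>r\<in>{r. r < R \<and> p r \<le> 1 / \<alpha>}. p r)"

definition C_const :: real where
  "C_const = (INF k'\<in>{1::nat..}. (1 - 1 / (2 * real k')) ^ k')"

definition Cbar_const :: real where
  "Cbar_const = (SUP k'\<in>{1::nat..}. (1 - 1 / (4 * real k')) ^ k')"

end

theory Submission
  imports Defs
begin

text \<open>Both claims compare \<open>1 - \<tau> = \<Sum>\<^sub>r \<rho>\<^sub>r (1 - \<rho>\<^sub>r)\<^sup>k\<close> with the mass of rare labels. By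
  Bernoulli's inequality every label with \<open>\<rho>\<^sub>r \<le> 1/(2k)\<close> contributes at least \<open>\<rho>\<^sub>r / 2\<close>, so
  \<open>\<gamma>\<^sub>2\<^sub>k / 2 \<le> 1 - \<tau>\<close>; every label with \<open>\<rho>\<^sub>r > 1/(4k)\<close> contributes at most \<open>C\<^sub>b\<^sub>a\<^sub>r \<rho>\<^sub>r\<close>, so
  \<open>1 - \<tau> \<le> \<gamma>\<^sub>4\<^sub>k + (1 - \<gamma>\<^sub>4\<^sub>k) C\<^sub>b\<^sub>a\<^sub>r\<close>, which together with \<open>C \<le> 1/2\<close> bounds the right-hand
  side of either claim by \<open>\<gamma>\<^sub>4\<^sub>k / 4\<close>. Chernoff bounds for the label counts and a union bound
  over the labels give, with probability at least \<open>1 - \<Delta>\<close>: for (i), the labels with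
  \<open>\<rho>\<^sub>r \<le> 1/(4k)\<close> keep empirical mass above \<open>\<gamma>\<^sub>4\<^sub>k / 2\<close> and each keeps empirical frequency
  below \<open>1/(2k)\<close>; for (ii), the labels with \<open>\<rho>\<^sub>r \<le> 1/(2k)\<close> have empirical mass below \<open>2 \<gamma>\<^sub>2\<^sub>k\<close>
  and every other label has empirical frequency above \<open>1/(4k)\<close>, so that the empirical
  \<open>\<gamma>\<^sub>4\<^sub>k\<close> is below \<open>2 \<gamma>\<^sub>2\<^sub>k \<le> 4 (1 - \<tau>)\<close>.\<close>

section \<open>Events of an i.i.d. label sample\<close>

definition label_count :: "nat \<Rightarrow> nat set \<Rightarrow> (nat \<Rightarrow> nat) \<Rightarrow> real" where
  "label_count N S Y = (\<Sum>j<N. of_bool (Y j \<in> S))"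

lemma sample_prob_eq_sum_if:
  "sample_prob R N rho E = (\<Sum>Y\<in>{..<N} \<rightarrow>\<^sub>E {..<R}. if E Y then \<Prod>j<N. rho (Y j) else 0)"
  unfolding sample_prob_def by (rule sum.inter_filter) (simp add: finite_PiE)

lemma sample_weight_nonneg:
  fixes rho :: "nat \<Rightarrow> real"
  assumes "\<And>r. r < R \<Longrightarrow> 0 \<le> rho r" and "Y \<in> {..<N} \<rightarrow>\<^sub>E {..<R}"
  shows "0 \<le> (\<Prod>j<N. rho (Y j))"
  using assms by (intro prod_nonneg) auto

lemma sum_sample_weights:
  fixes R N :: nat
  shows "(\<Sum>Y\<in>{..<N} \<rightarrow>\<^sub>E {..<R}. \<Prod>j<N. g (Y j)) = (\<Sum>r<R. g r :: real) ^ N"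
  by (subst prod_sum_PiE[symmetric]) auto

lemma sample_prob_mono:
  assumes "\<And>r. r < R \<Longrightarrow> 0 \<le> rho r"
    and "\<And>Y. Y \<in> {..<N} \<rightarrow>\<^sub>E {..<R} \<Longrightarrow> E Y \<Longrightarrow> F Y"
  shows "sample_prob R N rho E \<le> sample_prob R N rho F"
  unfolding sample_prob_eq_sum_if
  by (rule sum_mono) (use assms sample_weight_nonneg[OF assms(1)] in auto)

lemma sample_prob_not:
  assumes "(\<Sum>r<R. rho r) = 1"
  shows "sample_prob R N rho (\<lambda>Y. \<not> E Y) = 1 - sample_prob R N rho E"
proof -
  have "sample_prob R N rho (\<lambda>Y. \<not> E Y) + sample_prob R N rho E
      = (\<Sum>Y\<in>{..<N} \<rightarrow>\<^sub>E {..<R}. \<Prod>j<N. rho (Y j))"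
    unfolding sample_prob_eq_sum_if sum.distrib[symmetric] by (rule sum.cong) auto
  then show ?thesis
    using assms by (simp add: sum_sample_weights)
qed

lemma sample_prob_disj_le:
  assumes "\<And>r. r < R \<Longrightarrow> 0 \<le> rho r"
  shows "sample_prob R N rho (\<lambda>Y. E Y \<or> F Y) \<le> sample_prob R N rho E + sample_prob R N rho F"
  unfolding sample_prob_eq_sum_if sum.distrib[symmetric]
  by (rule sum_mono) (use sample_weight_nonneg[OF assms] in auto)

lemma sample_prob_Bex_le:
  assumes "\<And>r. r < R \<Longrightarrow> 0 \<le> rho r" and "finite A"
  shows "sample_prob R N rho (\<lambda>Y. \<exists>a\<in>A. E a Y) \<le> (\<Sum>a\<in>A. sample_prob R N rho (E a))"
  using assms(2)
proof (induction A rule: finite_induct)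
  case empty
  then show ?case by (simp add: sample_prob_def)
next
  case (insert a A)
  have "sample_prob R N rho (\<lambda>Y. \<exists>b\<in>insert a A. E b Y)
      \<le> sample_prob R N rho (E a) + sample_prob R N rho (\<lambda>Y. \<exists>b\<in>A. E b Y)"
    using sample_prob_disj_le[OF assms(1), where E = "E a"] by simp
  with insert show ?case by simp
qed

lemma sample_prob_ge_of_union_bound:
  assumes nn: "\<And>r. r < R \<Longrightarrow> 0 \<le> rho r" and rho_sum: "(\<Sum>r<R. rho r) = 1"
    and A: "A \<subseteq> {..<R}" and \<Delta>: "0 \<le> \<Delta>"
    and B: "sample_prob R N rho B \<le> \<Delta> / 2"
    and B': "\<And>r. r \<in> A \<Longrightarrow> sample_prob R N rho (B' r) \<le> \<Delta> / (2 * real R)"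
    and G: "\<And>Y. Y \<in> {..<N} \<rightarrow>\<^sub>E {..<R} \<Longrightarrow> \<not> B Y \<Longrightarrow> (\<And>r. r \<in> A \<Longrightarrow> \<not> B' r Y) \<Longrightarrow> G Y"
  shows "1 - \<Delta> \<le> sample_prob R N rho G"
proof -
  have R: "0 < real R"
    using rho_sum by (cases R) auto
  have finA: "finite A" and cardA: "real (card A) \<le> real R"
    using A finite_subset card_mono[OF finite_lessThan A] by auto
  have "sample_prob R N rho (\<lambda>Y. B Y \<or> (\<exists>r\<in>A. B' r Y))
      \<le> sample_prob R N rho B + sample_prob R N rho (\<lambda>Y. \<exists>r\<in>A. B' r Y)"
    by (rule sample_prob_disj_le[OF nn])
  also have "\<dots> \<le> sample_prob R N rho B + (\<Sum>r\<in>A. sample_prob R N rho (B' r))"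
    using sample_prob_Bex_le[OF nn finA] by simp
  also have "\<dots> \<le> \<Delta> / 2 + (\<Sum>r\<in>A. \<Delta> / (2 * real R))"
    using B B' by (intro add_mono sum_mono) auto
  also have "\<dots> \<le> \<Delta> / 2 + real R * (\<Delta> / (2 * real R))"
    using mult_right_mono[OF cardA, of "\<Delta> / (2 * real R)"] \<Delta> by simp
  also have "\<dots> = \<Delta>"
    using R by simp
  finally have "1 - \<Delta> \<le> sample_prob R N rho (\<lambda>Y. \<not> (B Y \<or> (\<exists>r\<in>A. B' r Y)))"
    unfolding sample_prob_not[OF rho_sum] by simp
  also have "\<dots> \<le> sample_prob R N rho G"
    using G by (intro sample_prob_mono[OF nn]) auto
  finally show ?thesis .
qed

section \<open>Label counts and empirical frequencies\<close>

lemma label_count_mgf: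
  assumes rho_sum: "(\<Sum>r<R. rho r) = 1" and S: "S \<subseteq> {..<R}"
  shows "(\<Sum>Y\<in>{..<N} \<rightarrow>\<^sub>E {..<R}. (\<Prod>j<N. rho (Y j)) * exp (t * label_count N S Y))
       = (1 + (\<Sum>r\<in>S. rho r) * (exp t - 1)) ^ N"
proof -
  let ?f = "\<lambda>r. rho r * exp (t * of_bool (r \<in> S))"
  have "(\<Prod>j<N. rho (Y j)) * exp (t * label_count N S Y) = (\<Prod>j<N. ?f (Y j))" for Y
    unfolding label_count_def sum_distrib_left exp_sum[OF finite_lessThan] prod.distrib by simp
  then have "(\<Sum>Y\<in>{..<N} \<rightarrow>\<^sub>E {..<R}. (\<Prod>j<N. rho (Y j)) * exp (t * label_count N S Y))
      = (\<Sum>r<R. ?f r) ^ N"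
    by (simp add: sum_sample_weights[where g = ?f])
  also have "(\<Sum>r<R. ?f r) = (\<Sum>r<R. rho r + (if r \<in> S then rho r * (exp t - 1) else 0))"
    by (rule sum.cong) (auto simp: algebra_simps)
  also have "\<dots> = 1 + (\<Sum>r\<in>S. rho r) * (exp t - 1)"
    using S by (simp add: sum.distrib rho_sum sum.If_cases Int_absorb1 sum_distrib_right)
  finally show ?thesis .
qed

lemma sample_prob_chernoff:
  assumes nn: "\<And>r. r < R \<Longrightarrow> 0 \<le> rho r" and rho_sum: "(\<Sum>r<R. rho r) = 1"
    and S: "S \<subseteq> {..<R}"
  shows "sample_prob R N rho (\<lambda>Y. t * a \<le> t * label_count N S Y)
       \<le> exp (real N * (\<Sum>r\<in>S. rho r) * (exp t - 1) - t * a)"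
proof -
  let ?p = "\<Sum>r\<in>S. rho r"
  have "0 \<le> ?p" and "?p \<le> (\<Sum>r<R. rho r)"
    using nn S by (auto intro: sum_nonneg sum_mono2)
  then have "0 \<le> (1 - ?p) + ?p * exp t"
    using rho_sum by simp
  then have base: "0 \<le> 1 + ?p * (exp t - 1)"
    by (simp add: algebra_simps)
  have "sample_prob R N rho (\<lambda>Y. t * a \<le> t * label_count N S Y)
      \<le> (\<Sum>Y\<in>{..<N} \<rightarrow>\<^sub>E {..<R}. (\<Prod>j<N. rho (Y j)) * exp (t * label_count N S Y - t * a))"
    unfolding sample_prob_eq_sum_if
  proof (rule sum_mono)
    fix Y assume "Y \<in> {..<N} \<rightarrow>\<^sub>E {..<R}"
    with nn have "0 \<le> (\<Prod>j<N. rho (Y j))"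
      by (rule sample_weight_nonneg)
    moreover have "1 \<le> exp (t * label_count N S Y - t * a)" if "t * a \<le> t * label_count N S Y"
      using that by simp
    ultimately show "(if t * a \<le> t * label_count N S Y then \<Prod>j<N. rho (Y j) else 0)
        \<le> (\<Prod>j<N. rho (Y j)) * exp (t * label_count N S Y - t * a)"
      by (auto simp: mult_le_cancel_left1)
  qed
  also have "\<dots> = exp (- t * a) * (1 + ?p * (exp t - 1)) ^ N"
    unfolding label_count_mgf[OF rho_sum S, symmetric] sum_distrib_left
    by (rule sum.cong) (simp_all add: exp_diff exp_minus field_simps)
  also have "\<dots> \<le> exp (- t * a) * exp (?p * (exp t - 1)) ^ N"
    using base by (intro mult_left_mono power_mono) auto
  also have "\<dots> = exp (real N * ?p * (exp t - 1) - t * a)"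
    by (simp add: exp_of_nat_mult[symmetric] exp_add[symmetric] algebra_simps)
  finally show ?thesis .
qed

lemma label_count_upper_tail:
  assumes nn: "\<And>r. r < R \<Longrightarrow> 0 \<le> rho r" and rho_sum: "(\<Sum>r<R. rho r) = 1"
    and S: "S \<subseteq> {..<R}" and m: "0 \<le> m" "real N * (\<Sum>r\<in>S. rho r) \<le> m"
  shows "sample_prob R N rho (\<lambda>Y. 2 * m \<le> label_count N S Y) \<le> exp (- m / 3)"
proof -
  have "sample_prob R N rho (\<lambda>Y. 2 * m \<le> label_count N S Y)
      \<le> sample_prob R N rho (\<lambda>Y. ln 2 * (2 * m) \<le> ln 2 * label_count N S Y)"
    using nn by (rule sample_prob_mono) (auto intro: mult_left_mono)
  also have "\<dots> \<le> exp (real N * (\<Sum>r\<in>S. rho r) * (exp (ln 2) - 1) - ln 2 * (2 * m))"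
    using nn rho_sum S by (rule sample_prob_chernoff)
  also have "\<dots> \<le> exp (- m / 3)"
    using m mult_left_mono[OF ln2_ge_two_thirds m(1)] by (simp add: algebra_simps)
  finally show ?thesis .
qed

lemma label_count_lower_tail:
  assumes nn: "\<And>r. r < R \<Longrightarrow> 0 \<le> rho r" and rho_sum: "(\<Sum>r<R. rho r) = 1"
    and S: "S \<subseteq> {..<R}" and m: "0 \<le> m" "m \<le> real N * (\<Sum>r\<in>S. rho r)"
  shows "sample_prob R N rho (\<lambda>Y. label_count N S Y \<le> m / 2) \<le> exp (- m / 8)"
proof -
  have "sample_prob R N rho (\<lambda>Y. label_count N S Y \<le> m / 2)
      \<le> sample_prob R N rho (\<lambda>Y. - ln 2 * (m / 2) \<le> - ln 2 * label_count N S Y)"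
    using nn by (rule sample_prob_mono) (auto intro: mult_left_mono_neg)
  also have "\<dots> \<le> exp (real N * (\<Sum>r\<in>S. rho r) * (exp (- ln 2) - 1) - (- ln 2) * (m / 2))"
    using nn rho_sum S by (rule sample_prob_chernoff)
  also have "\<dots> \<le> exp (- m / 8)"
    using m mult_left_mono[OF ln2_le_25_over_36 m(1)] by (simp add: exp_minus[of "ln 2"] algebra_simps)
  finally show ?thesis .
qed

lemma sum_emp_freq:
  assumes "finite S"
  shows "(\<Sum>r\<in>S. emp_freq N Y r) = label_count N S Y / real N"
proof -
  have "real (card {j. j < N \<and> Y j = r}) = (\<Sum>j<N. of_bool (Y j = r))" for r
    by (simp add: Int_def conj_commute)
  then have "(\<Sum>r\<in>S. emp_freq N Y r) = (\<Sum>j<N. \<Sum>r\<in>S. of_bool (Y j = r)) / real N"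
    unfolding emp_freq_def sum_divide_distrib[symmetric] by (simp add: sum.swap[of _ S])
  also have "\<dots> = label_count N S Y / real N"
    unfolding label_count_def using assms by (simp add: of_bool_def sum.delta)
  finally show ?thesis .
qed

lemma emp_freq_eq: "emp_freq N Y r = label_count N {r} Y / real N"
  using sum_emp_freq[of "{r}"] by simp

lemma sum_emp_freq_lessThan:
  assumes "Y \<in> {..<N} \<rightarrow>\<^sub>E {..<R}" and "0 < N"
  shows "(\<Sum>r<R. emp_freq N Y r) = 1"
proof -
  have "label_count N {..<R} Y = (\<Sum>j<N. 1)"
    unfolding label_count_def using assms(1) by (intro sum.cong) auto
  then show ?thesis
    using assms(2) by (simp add: sum_emp_freq)
qed

lemma emp_freq_nonneg: "0 \<le> emp_freq N Y r"
  by (simp add: emp_freq_def)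

section \<open>Deterministic bounds on \<open>1 - \<tau>\<close>\<close>

lemma distribution_le_one:
  fixes p :: "nat \<Rightarrow> real"
  assumes "\<And>r. r < R \<Longrightarrow> 0 \<le> p r" and "(\<Sum>r<R. p r) = 1" and "r < R"
  shows "p r \<le> 1"
  using member_le_sum[of r "{..<R}" p] assms by simp

lemma one_minus_tau_of: "1 - tau_of R k p = (\<Sum>r<R. p r * (1 - p r) ^ k)"
  by (simp add: tau_of_def)

lemma one_minus_tau_of_nonneg:
  fixes p :: "nat \<Rightarrow> real"
  assumes "\<And>r. r < R \<Longrightarrow> 0 \<le> p r" and "(\<Sum>r<R. p r) = 1"
  shows "0 \<le> 1 - tau_of R k p"
  unfolding one_minus_tau_of using assms distribution_le_one[OF assms] by (intro sum_nonneg) auto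

lemma half_le_mult_one_minus_power:
  fixes p :: real
  assumes "0 \<le> p" and "p \<le> 1 / (2 * real k)" and "1 \<le> k"
  shows "p / 2 \<le> p * (1 - p) ^ k"
proof -
  have kp: "real k * p \<le> 1 / 2"
    using assms by (simp add: field_simps)
  with assms have "p \<le> 1"
    using mult_right_mono[of 1 "real k" p] by simp
  then have "1 + real k * (- p) \<le> (1 + - p) ^ k"
    by (intro Bernoulli_inequality) simp
  with kp have "1 / 2 \<le> (1 - p) ^ k"
    by simp
  then show ?thesis
    using mult_left_mono[OF _ assms(1)] by fastforce
qed

lemma half_mass_le_one_minus_tau_of:
  fixes p :: "nat \<Rightarrow> real"
  assumes nn: "\<And>r. r < R \<Longrightarrow> 0 \<le> p r" and p_sum: "(\<Sum>r<R. p r) = 1"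
    and S: "S \<subseteq> {..<R}" and small: "\<And>r. r \<in> S \<Longrightarrow> p r \<le> 1 / (2 * real k)" and k: "1 \<le> k"
  shows "(\<Sum>r\<in>S. p r) / 2 \<le> 1 - tau_of R k p"
proof -
  have "(\<Sum>r\<in>S. p r) / 2 = (\<Sum>r\<in>S. p r / 2)"
    by (simp add: sum_divide_distrib)
  also have "\<dots> \<le> (\<Sum>r\<in>S. p r * (1 - p r) ^ k)"
    using nn small S k by (intro sum_mono half_le_mult_one_minus_power) auto
  also have "\<dots> \<le> (\<Sum>r<R. p r * (1 - p r) ^ k)"
    using S nn distribution_le_one[OF nn p_sum] by (intro sum_mono2) auto
  finally show ?thesis
    unfolding one_minus_tau_of .
qed

lemma C_const_le_half: "C_const \<le> 1 / 2"
proof -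
  have "bdd_below ((\<lambda>k'. (1 - 1 / (2 * real k')) ^ k') ` {1::nat..})"
    by (intro bdd_belowI2[where m = 0]) (simp add: field_simps)
  then have "C_const \<le> (1 - 1 / (2 * real (1::nat))) ^ 1"
    unfolding C_const_def by (intro cINF_lower) auto
  then show ?thesis
    by simp
qed

lemma power_le_Cbar_const:
  assumes "1 \<le> k"
  shows "(1 - 1 / (4 * real k)) ^ k \<le> Cbar_const"
proof -
  have "bdd_above ((\<lambda>k'. (1 - 1 / (4 * real k')) ^ k') ` {1::nat..})"
    by (intro bdd_aboveI2[where M = 1] power_le_one) (auto simp: field_simps)
  then show ?thesis
    unfolding Cbar_const_def using assms by (intro cSUP_upper) auto
qed

lemma Cbar_const_pos: "0 < Cbar_const"
  using power_le_Cbar_const[of 1] by simp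

lemma one_minus_tau_of_le:
  fixes p :: "nat \<Rightarrow> real"
  assumes nn: "\<And>r. r < R \<Longrightarrow> 0 \<le> p r" and p_sum: "(\<Sum>r<R. p r) = 1" and k: "1 \<le> k"
  shows "1 - tau_of R k p \<le> gamma_of R (4 * real k) p + (1 - gamma_of R (4 * real k) p) * Cbar_const"
proof -
  define P where "P r \<longleftrightarrow> p r \<le> 1 / (4 * real k)" for r
  have split: "(\<Sum>r<R. if P r then f r else g r)
      = (\<Sum>r\<in>{r. r < R \<and> P r}. f r) + (\<Sum>r\<in>{r. r < R \<and> \<not> P r}. g r)" for f g :: "nat \<Rightarrow> real"
    by (simp add: sum.If_cases Int_def conj_commute)
  have gamma: "gamma_of R (4 * real k) p = (\<Sum>r\<in>{r. r < R \<and> P r}. p r)"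
    by (simp add: gamma_of_def P_def)
  have large: "(\<Sum>r\<in>{r. r < R \<and> \<not> P r}. p r) = 1 - gamma_of R (4 * real k) p"
    using split[of p p] p_sum gamma by simp
  have "1 - tau_of R k p \<le> (\<Sum>r<R. if P r then p r else p r * Cbar_const)"
    unfolding one_minus_tau_of
  proof (rule sum_mono)
    fix r assume "r \<in> {..<R}"
    then have p0: "0 \<le> p r" and p1: "p r \<le> 1"
      using nn distribution_le_one[OF nn p_sum] by auto
    show "p r * (1 - p r) ^ k \<le> (if P r then p r else p r * Cbar_const)"
    proof (cases "P r")
      case True
      have "(1 - p r) ^ k \<le> 1"
        using p0 p1 by (intro power_le_one) auto
      then show ?thesis
        using True p0 by (simp add: mult_left_le)
    next
      case False
      then have "(1 - p r) ^ k \<le> (1 - 1 / (4 * real k)) ^ k"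
        using p1 by (intro power_mono) (auto simp: P_def)
      also have "\<dots> \<le> Cbar_const"
        using k by (rule power_le_Cbar_const)
      finally show ?thesis
        using False p0 by (simp add: mult_left_mono)
    qed
  qed
  also have "\<dots> = gamma_of R (4 * real k) p + (1 - gamma_of R (4 * real k) p) * Cbar_const"
    unfolding split by (simp add: gamma large sum_distrib_right[symmetric])
  finally show ?thesis .
qed

lemma gamma_of_nonneg:
  fixes p :: "nat \<Rightarrow> real"
  assumes "\<And>r. r < R \<Longrightarrow> 0 \<le> p r"
  shows "0 \<le> gamma_of R \<alpha> p"
  unfolding gamma_of_def using assms by (intro sum_nonneg) auto

lemma gamma_of_le_one:
  fixes p :: "nat \<Rightarrow> real"
  assumes "\<And>r. r < R \<Longrightarrow> 0 \<le> p r" and "(\<Sum>r<R. p r) = 1"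
  shows "gamma_of R \<alpha> p \<le> 1"
  using sum_mono2[of "{..<R}" "{r. r < R \<and> p r \<le> 1 / \<alpha>}" p] assms
  by (auto simp: gamma_of_def)

text \<open>The right-hand side of claim (i); that of claim (ii) is its value at the empirical frequencies.\<close>
definition transfer_bound :: "nat \<Rightarrow> nat \<Rightarrow> (nat \<Rightarrow> real) \<Rightarrow> real" where
  "transfer_bound R k p =
     C_const / 2 * inverse (1 + (1 - gamma_of R (4 * real k) p) / gamma_of R (4 * real k) p * Cbar_const)
     * (1 - tau_of R k p)"

lemma transfer_bound_le_quarter_gamma:
  fixes p :: "nat \<Rightarrow> real"
  assumes nn: "\<And>r. r < R \<Longrightarrow> 0 \<le> p r" and p_sum: "(\<Sum>r<R. p r) = 1" and k: "1 \<le> k"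
    and g_pos: "0 < gamma_of R (4 * real k) p"
  shows "transfer_bound R k p \<le> gamma_of R (4 * real k) p / 4"
proof -
  define g where "g = gamma_of R (4 * real k) p"
  define D where "D = 1 + (1 - g) / g * Cbar_const"
  have g: "0 < g" "g \<le> 1"
    using g_pos gamma_of_le_one[OF nn p_sum] by (auto simp: g_def)
  then have D: "0 < D"
    using Cbar_const_pos by (simp add: D_def add_pos_nonneg)
  have gD: "g * D = g + (1 - g) * Cbar_const"
    using g by (simp add: D_def field_simps)
  have "0 \<le> 1 - tau_of R k p" and "1 - tau_of R k p \<le> g * D"
    using one_minus_tau_of_nonneg[OF nn p_sum] one_minus_tau_of_le[OF nn p_sum k] gD
    by (simp_all add: g_def)
  then have X: "0 \<le> inverse D * (1 - tau_of R k p)" "inverse D * (1 - tau_of R k p) \<le> g"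
    using D by (simp_all add: field_simps)
  have "C_const / 2 * (inverse D * (1 - tau_of R k p)) \<le> 1 / 4 * (inverse D * (1 - tau_of R k p))"
    using C_const_le_half X(1) by (intro mult_right_mono) auto
  also have "\<dots> \<le> 1 / 4 * g"
    using X(2) by simp
  finally have "C_const / 2 * (inverse D * (1 - tau_of R k p)) \<le> g / 4"
    by simp
  then show ?thesis
    unfolding transfer_bound_def g_def[symmetric] D_def[symmetric] by (simp add: mult.assoc)
qed

section \<open>The two high-probability estimates\<close>

lemma exp_le_one_div_of_ln_le:
  fixes x c :: real
  assumes "0 < c" and "ln c \<le> - x"
  shows "exp x \<le> 1 / c"
proof -
  have "exp x \<le> exp (- ln c)"
    using assms(2) by simp
  also have "\<dots> = 1 / c"
    using assms(1) by (simp add: exp_minus inverse_eq_divide)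
  finally show ?thesis .
qed

lemma sample_size_bounds:
  fixes n g a b x y :: real
  assumes "0 < g" and "0 \<le> a * x" and "0 \<le> b * y" and "a / g * x + b * y \<le> n"
  shows "a * x \<le> n * g" and "b * y \<le> n"
proof -
  have "0 \<le> a / g * x"
    using assms(1,2) by (simp add: mult.commute times_divide_eq_right)
  with assms show "b * y \<le> n"
    by linarith
  from assms have "a * x / g \<le> n"
    by (simp add: mult.commute times_divide_eq_right)
  with assms(1) show "a * x \<le> n * g"
    by (simp add: divide_le_eq)
qed

lemma one_minus_emp_tau_lower_bound:
  fixes R N k :: nat and rho :: "nat \<Rightarrow> real" and \<Delta> :: real
  assumes nn: "\<And>r. r < R \<Longrightarrow> 0 \<le> rho r" and rho_sum: "(\<Sum>r<R. rho r) = 1" and k: "1 \<le> k"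
    and \<Delta>: "0 < \<Delta>" "\<Delta> < 1" and g_pos: "0 < gamma_of R (4 * real k) rho"
    and N: "8 / gamma_of R (4 * real k) rho * ln (2 / \<Delta>) + 12 * real k * ln (2 * real R / \<Delta>) \<le> real N"
  shows "1 - \<Delta> \<le> sample_prob R N rho (\<lambda>Y. transfer_bound R k rho \<le> 1 - tau_of R k (emp_freq N Y))"
proof -
  define g where "g = gamma_of R (4 * real k) rho"
  define S where "S = {r. r < R \<and> rho r \<le> 1 / (4 * real k)}"
  have S: "S \<subseteq> {..<R}" and g_S: "g = (\<Sum>r\<in>S. rho r)"
    by (auto simp: S_def g_def gamma_of_def)
  have R: "1 \<le> real R"
    using rho_sum by (cases R) auto
  have ln_pos: "0 < ln (2 / \<Delta>)" "0 < ln (2 * real R / \<Delta>)"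
    using \<Delta> R by (simp_all add: less_divide_eq)
  have Ng: "8 * ln (2 / \<Delta>) \<le> real N * g" and Nk: "12 * real k * ln (2 * real R / \<Delta>) \<le> real N"
    using sample_size_bounds[OF g_pos _ _ N] ln_pos by (simp_all add: g_def)
  moreover have "0 < 12 * real k * ln (2 * real R / \<Delta>)"
    using k ln_pos by simp
  ultimately have N_pos: "0 < N"
    by simp
  show ?thesis
    using nn rho_sum S less_imp_le[OF \<Delta>(1)]
  proof (rule sample_prob_ge_of_union_bound[where
        B = "\<lambda>Y. label_count N S Y \<le> real N * g / 2" and
        B' = "\<lambda>r Y. 2 * (real N / (4 * real k)) \<le> label_count N {r} Y"])
    have "sample_prob R N rho (\<lambda>Y. label_count N S Y \<le> real N * g / 2) \<le> exp (- (real N * g) / 8)"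
      using nn rho_sum S by (rule label_count_lower_tail) (use g_S g_pos in \<open>simp_all add: g_def\<close>)
    also have "\<dots> \<le> 1 / (2 / \<Delta>)"
      using \<Delta> Ng by (intro exp_le_one_div_of_ln_le) auto
    finally show "sample_prob R N rho (\<lambda>Y. label_count N S Y \<le> real N * g / 2) \<le> \<Delta> / 2"
      by simp
  next
    fix r assume "r \<in> S"
    then have rare: "real N * rho r \<le> real N * (1 / (4 * real k))"
      by (intro mult_left_mono) (auto simp: S_def)
    have "sample_prob R N rho (\<lambda>Y. 2 * (real N / (4 * real k)) \<le> label_count N {r} Y)
        \<le> exp (- (real N / (4 * real k)) / 3)"
      using nn rho_sum by (rule label_count_upper_tail) (use \<open>r \<in> S\<close> S rare in auto)
    also have "\<dots> \<le> 1 / (2 * real R / \<Delta>)"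
      using \<Delta> R k Nk by (intro exp_le_one_div_of_ln_le) (auto simp: field_simps)
    finally show "sample_prob R N rho (\<lambda>Y. 2 * (real N / (4 * real k)) \<le> label_count N {r} Y)
        \<le> \<Delta> / (2 * real R)"
      by simp
  next
    fix Y assume Y: "Y \<in> {..<N} \<rightarrow>\<^sub>E {..<R}"
      and mass: "\<not> label_count N S Y \<le> real N * g / 2"
      and counts: "\<And>r. r \<in> S \<Longrightarrow> \<not> 2 * (real N / (4 * real k)) \<le> label_count N {r} Y"
    have "emp_freq N Y r \<le> 1 / (2 * real k)" if "r \<in> S" for r
      using counts[OF that] N_pos k unfolding emp_freq_eq by (simp add: field_simps)
    then have "(\<Sum>r\<in>S. emp_freq N Y r) / 2 \<le> 1 - tau_of R k (emp_freq N Y)"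
      using sum_emp_freq_lessThan[OF Y N_pos] S k
      by (intro half_mass_le_one_minus_tau_of) (auto simp: emp_freq_nonneg)
    moreover have "g / 2 < (\<Sum>r\<in>S. emp_freq N Y r)"
      using mass N_pos sum_emp_freq[OF finite_subset[OF S finite_lessThan]] by (simp add: field_simps)
    moreover have "transfer_bound R k rho \<le> g / 4"
      unfolding g_def using nn rho_sum k g_pos by (rule transfer_bound_le_quarter_gamma)
    ultimately show "transfer_bound R k rho \<le> 1 - tau_of R k (emp_freq N Y)"
      by linarith
  qed
qed

lemma one_minus_tau_lower_bound:
  fixes R N k :: nat and rho :: "nat \<Rightarrow> real" and \<Delta> :: real
  assumes nn: "\<And>r. r < R \<Longrightarrow> 0 \<le> rho r" and rho_sum: "(\<Sum>r<R. rho r) = 1" and k: "1 \<le> k"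
    and \<Delta>: "0 < \<Delta>" "\<Delta> < 1" and g_pos: "0 < gamma_of R (2 * real k) rho"
    and N: "3 / gamma_of R (2 * real k) rho * ln (2 / \<Delta>) + 16 * real k * ln (2 * real R / \<Delta>) \<le> real N"
  shows "1 - \<Delta> \<le> sample_prob R N rho (\<lambda>Y.
           (if gamma_of R (4 * real k) (emp_freq N Y) = 0 then 0 else transfer_bound R k (emp_freq N Y))
             \<le> 1 - tau_of R k rho)"
proof -
  define g where "g = gamma_of R (2 * real k) rho"
  define S where "S = {r. r < R \<and> rho r \<le> 1 / (2 * real k)}"
  define L where "L = {r. r < R \<and> \<not> rho r \<le> 1 / (2 * real k)}"
  have S: "S \<subseteq> {..<R}" and L: "L \<subseteq> {..<R}" and g_S: "g = (\<Sum>r\<in>S. rho r)"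
    by (auto simp: S_def L_def g_def gamma_of_def)
  have R: "1 \<le> real R"
    using rho_sum by (cases R) auto
  have ln_pos: "0 < ln (2 / \<Delta>)" "0 < ln (2 * real R / \<Delta>)"
    using \<Delta> R by (simp_all add: less_divide_eq)
  have Ng: "3 * ln (2 / \<Delta>) \<le> real N * g" and Nk: "16 * real k * ln (2 * real R / \<Delta>) \<le> real N"
    using sample_size_bounds[OF g_pos _ _ N] ln_pos by (simp_all add: g_def)
  moreover have "0 < 16 * real k * ln (2 * real R / \<Delta>)"
    using k ln_pos by simp
  ultimately have N_pos: "0 < N"
    by simp
  show ?thesis
    using nn rho_sum L less_imp_le[OF \<Delta>(1)]
  proof (rule sample_prob_ge_of_union_bound[where
        B = "\<lambda>Y. 2 * (real N * g) \<le> label_count N S Y" and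
        B' = "\<lambda>r Y. label_count N {r} Y \<le> real N / (2 * real k) / 2"])
    have "sample_prob R N rho (\<lambda>Y. 2 * (real N * g) \<le> label_count N S Y) \<le> exp (- (real N * g) / 3)"
      using nn rho_sum S by (rule label_count_upper_tail) (use g_S g_pos in \<open>simp_all add: g_def\<close>)
    also have "\<dots> \<le> 1 / (2 / \<Delta>)"
      using \<Delta> Ng by (intro exp_le_one_div_of_ln_le) auto
    finally show "sample_prob R N rho (\<lambda>Y. 2 * (real N * g) \<le> label_count N S Y) \<le> \<Delta> / 2"
      by simp
  next
    fix r assume "r \<in> L"
    then have frequent: "real N * (1 / (2 * real k)) \<le> real N * rho r"
      by (intro mult_left_mono) (auto simp: L_def)
    have "sample_prob R N rho (\<lambda>Y. label_count N {r} Y \<le> real N / (2 * real k) / 2)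
        \<le> exp (- (real N / (2 * real k)) / 8)"
      using nn rho_sum by (rule label_count_lower_tail) (use \<open>r \<in> L\<close> L frequent in auto)
    also have "\<dots> \<le> 1 / (2 * real R / \<Delta>)"
      using \<Delta> R k Nk by (intro exp_le_one_div_of_ln_le) (auto simp: field_simps)
    finally show "sample_prob R N rho (\<lambda>Y. label_count N {r} Y \<le> real N / (2 * real k) / 2)
        \<le> \<Delta> / (2 * real R)"
      by simp
  next
    fix Y assume Y: "Y \<in> {..<N} \<rightarrow>\<^sub>E {..<R}"
      and mass: "\<not> 2 * (real N * g) \<le> label_count N S Y"
      and counts: "\<And>r. r \<in> L \<Longrightarrow> \<not> label_count N {r} Y \<le> real N / (2 * real k) / 2"
    let ?g' = "gamma_of R (4 * real k) (emp_freq N Y)"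
    have "{r. r < R \<and> emp_freq N Y r \<le> 1 / (4 * real k)} \<subseteq> S"
      using counts N_pos k by (force simp: S_def L_def emp_freq_eq field_simps)
    then have "?g' \<le> (\<Sum>r\<in>S. emp_freq N Y r)"
      unfolding gamma_of_def using S by (intro sum_mono2) (auto intro: finite_subset simp: emp_freq_nonneg)
    also have "\<dots> < 2 * g"
      using mass N_pos sum_emp_freq[OF finite_subset[OF S finite_lessThan]] by (simp add: field_simps)
    also have "g \<le> 2 * (1 - tau_of R k rho)"
      using half_mass_le_one_minus_tau_of[OF nn rho_sum S _ k] g_S by (auto simp: S_def)
    finally have "?g' / 4 < 1 - tau_of R k rho"
      by simp
    moreover have "transfer_bound R k (emp_freq N Y) \<le> ?g' / 4" if "?g' \<noteq> 0"
    proof -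
      have "0 \<le> ?g'"
        by (intro gamma_of_nonneg emp_freq_nonneg)
      with that have "0 < ?g'"
        by simp
      then show ?thesis
        by (intro transfer_bound_le_quarter_gamma emp_freq_nonneg sum_emp_freq_lessThan[OF Y N_pos] k)
    qed
    ultimately show "(if ?g' = 0 then 0 else transfer_bound R k (emp_freq N Y)) \<le> 1 - tau_of R k rho"
      using one_minus_tau_of_nonneg[OF nn rho_sum] by auto
  qed
qed

theorem mainTheorem2:
  fixes R N k :: nat and rho :: "nat \<Rightarrow> real" and \<Delta> :: real
  assumes R2: "R \<ge> 2"
    and rho_pos: "\<And>r. r < R \<Longrightarrow> rho r > 0"
    and rho_sum: "(\<Sum>r<R. rho r) = 1"
    and k1: "k \<ge> 1"
    and Delta: "0 < \<Delta>" "\<Delta> < 1"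
  shows
    "(gamma_of R (4 * real k) rho > 0 \<and>
      real N \<ge> 8 / gamma_of R (4 * real k) rho * ln (2 / \<Delta>) + 12 * real k * ln (2 * real R / \<Delta>)
      \<longrightarrow>
      sample_prob R N rho (\<lambda>Y.
         1 - tau_of R k (emp_freq N Y) \<ge>
           C_const / 2 * inverse (1 + (1 - gamma_of R (4 * real k) rho) / gamma_of R (4 * real k) rho * Cbar_const)
           * (1 - tau_of R k rho)) \<ge> 1 - \<Delta>)
     \<and>
     (gamma_of R (2 * real k) rho > 0 \<and>
      real N \<ge> 3 / gamma_of R (2 * real k) rho * ln (2 / \<Delta>) + 16 * real k * ln (2 * real R / \<Delta>)
      \<longrightarrow>
      sample_prob R N rho (\<lambda>Y.
         1 - tau_of R k rho \<ge>
           (if gamma_of R (4 * real k) (emp_freq N Y) = 0 then 0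
            else C_const / 2 * inverse (1 + (1 - gamma_of R (4 * real k) (emp_freq N Y)) / gamma_of R (4 * real k) (emp_freq N Y) * Cbar_const)
              * (1 - tau_of R k (emp_freq N Y)))) \<ge> 1 - \<Delta>)"
proof -
  have nn: "\<And>r. r < R \<Longrightarrow> 0 \<le> rho r"
    using rho_pos by (simp add: less_imp_le)
  show ?thesis
    using one_minus_emp_tau_lower_bound[where R = R and N = N and k = k and rho = rho]
      one_minus_tau_lower_bound[where R = R and N = N and k = k and rho = rho]
      nn rho_sum k1 Delta
    unfolding transfer_bound_def by blast
qed

end
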